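(* Let $\Omega_0=(-\infty,-2)^3\subset\mathbb{R}^3$ and $\Omega=\Gamma\cdot\Omega_0$. If $\gamma\in\Gamma_{(2)}$ and $\gamma\Omega_0\cap\Omega_0\neq\emptyset$, then $\gamma$ is the identity. Consequently $\Omega$ is the disjoint union $\coprod_{\gamma\in\Gamma_{(2)}}\gamma\Omega_0$.
   Context: $\kappa(x,y,z)=x^2+y^2+z^2-xyz-2$. $\Gamma$ denotes the group of polynomial automorphisms of $\mathbb{C}^3$ generated by: all permutations of the coordinates $x,y,z$; the three sign changes $(x,y,z)\mapsto(x,-y,-z)$, $(x,y,z)\mapsto(-x,y,-z)$, $(x,y,z)\mapsto(-x,-y,z)$; and the quadratic reflection $(x,y,z)\mapsto(yz-x,y,z)$. Every element of $\Gamma$ preserves $\kappa$ and maps $\mathbb{R}^3$ to itself. $\Gamma_{(2)}$ denotes the subgroup of $\Gamma$ generated by the three sign changes and the three quadratic reflections $Q_x(x,y,z)=(yz-x,y,z)$, $Q_y(x,y,z)=(x,xz-y,z)$, $Q_z(x,y,z)=(x,y,xy-z)$; it is the kernel of the natural surjection $\Gamma\to\mathfrak{S}_3$ and has index $6$. *)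

theory Defs
  imports Complex_Main
begin

type_synonym pt = "complex \<times> complex \<times> complex"

definition kappa :: "pt \<Rightarrow> complex" where
  "kappa p = (case p of (x,y,z) \<Rightarrow> x^2 + y^2 + z^2 - x*y*z - 2)"

definition perm_maps :: "(pt \<Rightarrow> pt) set" where
  "perm_maps = {(\<lambda>(x,y,z). (x,y,z)), (\<lambda>(x,y,z). (y,x,z)), (\<lambda>(x,y,z). (z,y,x)),
                (\<lambda>(x,y,z). (x,z,y)), (\<lambda>(x,y,z). (y,z,x)), (\<lambda>(x,y,z). (z,x,y))}"

definition sign_maps :: "(pt \<Rightarrow> pt) set" where
  "sign_maps = {(\<lambda>(x,y,z). (x,-y,-z)), (\<lambda>(x,y,z). (-x,y,-z)), (\<lambda>(x,y,z). (-x,-y,z))}"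

definition Qx :: "pt \<Rightarrow> pt" where "Qx = (\<lambda>(x,y,z). (y*z - x, y, z))"
definition Qy :: "pt \<Rightarrow> pt" where "Qy = (\<lambda>(x,y,z). (x, x*z - y, z))"
definition Qz :: "pt \<Rightarrow> pt" where "Qz = (\<lambda>(x,y,z). (x, y, x*y - z))"

text \<open>Submonoid of maps generated by a set S under composition; when S is closed
  under inverses (as all our generating sets are) this is the group generated by S.\<close>
inductive_set generated :: "(pt \<Rightarrow> pt) set \<Rightarrow> (pt \<Rightarrow> pt) set" for S where
  gen_id: "id \<in> generated S"
| gen_comp: "g \<in> S \<Longrightarrow> h \<in> generated S \<Longrightarrow> g \<circ> h \<in> generated S"

definition Gamma :: "(pt \<Rightarrow> pt) set" where
  "Gamma = generated (perm_maps \<union> sign_maps \<union> {Qx})"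

definition Gamma2 :: "(pt \<Rightarrow> pt) set" where
  "Gamma2 = generated (sign_maps \<union> {Qx, Qy, Qz})"

definition Omega0 :: "pt set" where
  "Omega0 = {(complex_of_real a, complex_of_real b, complex_of_real c) | a b c.
               a < -2 \<and> b < -2 \<and> c < -2}"

definition Omega :: "pt set" where
  "Omega = (\<Union>\<gamma>\<in>Gamma. \<gamma> ` Omega0)"

end

theory Submission
  imports Defs
begin

(* Ping-pong on the sign of xyz.  The sign changes together with id form a Klein four-group
   commuting with the Vieta involutions Qx, Qy, Qz, and all generators of Gamma2 are involutions,
   so every element of Gamma2 is v o w with v in that group and w a reduced word in the Q's.
   On real points, Qa maps the box (-oo,-2)^3, and every region where all coordinates exceed 2
   in absolute value, xyz > 0 and a coordinate b different from a strictly dominates, into the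
   corresponding region for a.  So a nonempty reduced word sends Omega0 to points with xyz > 0,
   which sign changes preserve, while xyz < 0 on Omega0; and no sign change maps a point of Omega0
   into Omega0.  Permutations normalise Gamma2 and preserve Omega0, so Gamma Omega0 = Gamma2 Omega0. *)

lemma generated_base: "s \<in> S \<Longrightarrow> s \<in> generated S"
  using generated.gen_comp[OF _ generated.gen_id] by simp

lemma generated_comp: "g \<in> generated S \<Longrightarrow> h \<in> generated S \<Longrightarrow> g \<circ> h \<in> generated S"
  by (induction g rule: generated.induct) (auto simp: comp_assoc intro: generated.intros)

lemma generated_subset: "S \<subseteq> generated T \<Longrightarrow> generated S \<subseteq> generated T"
proof
  fix g assume "g \<in> generated S" "S \<subseteq> generated T"
  then show "g \<in> generated T"
    by (induction g rule: generated.induct) (auto intro: generated.gen_id generated_comp)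
qed

lemma generated_image_subset:
  assumes "\<And>s. s \<in> S \<Longrightarrow> s ` A \<subseteq> A" and "g \<in> generated S"
  shows "g ` A \<subseteq> A"
  using assms(2) by (induction g rule: generated.induct) (use assms(1) in \<open>auto simp: image_comp[symmetric]\<close>)

lemma generated_commute:
  assumes "\<And>s. s \<in> S \<Longrightarrow> \<exists>s'\<in>S. q \<circ> s = s' \<circ> q" and "g \<in> generated S"
  shows "\<exists>g'\<in>generated S. q \<circ> g = g' \<circ> q"
  using assms(2)
proof (induction g rule: generated.induct)
  case gen_id
  show ?case by (auto intro!: bexI[of _ id] generated.gen_id)
next
  case (gen_comp s h)
  obtain s' where s': "s' \<in> S" "q \<circ> s = s' \<circ> q" using assms(1) gen_comp.hyps by blast
  obtain h' where h': "h' \<in> generated S" "q \<circ> h = h' \<circ> q" using gen_comp.IH by blast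
  have "q \<circ> (s \<circ> h) = s' \<circ> (q \<circ> h)" using s'(2) by (simp add: comp_assoc[symmetric])
  also have "\<dots> = (s' \<circ> h') \<circ> q" using h'(2) by (simp add: comp_assoc)
  finally show ?case using s'(1) h'(1) by (blast intro: generated.gen_comp)
qed

lemma generated_split:
  assumes "\<And>q s. q \<in> P \<Longrightarrow> s \<in> S \<Longrightarrow> \<exists>s'\<in>S. q \<circ> s = s' \<circ> q"
    and "g \<in> generated (P \<union> S)"
  shows "\<exists>h\<in>generated S. \<exists>p\<in>generated P. g = h \<circ> p"
  using assms(2)
proof (induction g rule: generated.induct)
  case gen_id
  show ?case by (auto intro!: bexI[of _ id] generated.gen_id)
next
  case (gen_comp s g)
  then obtain h p where hp: "h \<in> generated S" "p \<in> generated P" "g = h \<circ> p" by blast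
  show ?case
  proof (cases "s \<in> P")
    case True
    obtain h' where h': "h' \<in> generated S" "s \<circ> h = h' \<circ> s"
      using generated_commute[OF assms(1) hp(1)] True by blast
    have "s \<circ> p \<in> generated P" using True hp(2) by (rule generated.gen_comp)
    moreover have "s \<circ> g = h' \<circ> (s \<circ> p)" using h'(2) hp(3) by (simp add: comp_assoc[symmetric])
    ultimately show ?thesis using h'(1) by blast
  next
    case False
    then have "s \<circ> h \<in> generated S" using gen_comp.hyps hp(1) by (auto intro: generated.gen_comp)
    moreover have "s \<circ> g = (s \<circ> h) \<circ> p" using hp(3) by (simp add: comp_assoc)
    ultimately show ?thesis using hp(2) by blast
  qed
qed

lemma generated_inverse:
  assumes "\<And>s. s \<in> S \<Longrightarrow> s \<circ> s = id" and "g \<in> generated S"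
  shows "\<exists>h\<in>generated S. h \<circ> g = id \<and> g \<circ> h = id"
  using assms(2)
proof (induction g rule: generated.induct)
  case gen_id
  show ?case by (rule bexI[of _ id]) (simp_all add: generated.gen_id)
next
  case (gen_comp s g)
  then obtain h where h: "h \<in> generated S" "h \<circ> g = id" "g \<circ> h = id" by blast
  have ss: "s \<circ> s = id" using assms(1) gen_comp.hyps by blast
  have "(h \<circ> s) \<circ> (s \<circ> g) = h \<circ> (s \<circ> s) \<circ> g" "(s \<circ> g) \<circ> (h \<circ> s) = s \<circ> (g \<circ> h) \<circ> s"
    by (simp_all add: comp_assoc)
  then have "(h \<circ> s) \<circ> (s \<circ> g) = id" "(s \<circ> g) \<circ> (h \<circ> s) = id"
    using ss h(2,3) by simp_all
  moreover have "h \<circ> s \<in> generated S" using generated_comp[OF h(1) generated_base] gen_comp.hyps by blast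
  ultimately show ?case by blast
qed

type_synonym 'a triple = "'a \<times> 'a \<times> 'a"

datatype axis = X | Y | Z

definition vieta_flip :: "axis \<Rightarrow> 'a::comm_ring triple \<Rightarrow> 'a triple" where
  "vieta_flip a = (\<lambda>(x, y, z). case a of
      X \<Rightarrow> (y*z - x, y, z) | Y \<Rightarrow> (x, x*z - y, z) | Z \<Rightarrow> (x, y, x*y - z))"

lemma vieta_flip_XYZ: "vieta_flip X = Qx" "vieta_flip Y = Qy" "vieta_flip Z = Qz"
  by (auto simp: fun_eq_iff vieta_flip_def Qx_def Qy_def Qz_def mult.commute)

lemma UNIV_axis: "UNIV = {X, Y, Z}"
  using axis.exhaust by blast

lemma range_vieta_flip: "range vieta_flip = {Qx, Qy, Qz}"
  by (simp add: UNIV_axis vieta_flip_XYZ)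

lemma vieta_flip_involution: "vieta_flip a \<circ> vieta_flip a = id"
  by (cases a) (auto simp: fun_eq_iff vieta_flip_def)

lemma sign_map_involution: "s \<in> sign_maps \<Longrightarrow> s \<circ> s = id"
  by (auto simp: sign_maps_def fun_eq_iff)

lemma sign_map_vieta_flip_commute: "s \<in> sign_maps \<Longrightarrow> s \<circ> vieta_flip a = vieta_flip a \<circ> s"
  by (cases a) (auto simp: sign_maps_def vieta_flip_def fun_eq_iff)

definition triple_prod :: "'a::comm_semiring_1 triple \<Rightarrow> 'a" where
  "triple_prod = (\<lambda>(x, y, z). x*y*z)"

lemma triple_prod_sign_map: "s \<in> sign_maps \<Longrightarrow> triple_prod (s p) = triple_prod p"
  by (cases p) (auto simp: sign_maps_def triple_prod_def)

definition real_point :: "real triple \<Rightarrow> pt" where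
  "real_point = (\<lambda>(x, y, z). (of_real x, of_real y, of_real z))"

lemma vieta_flip_real_point: "vieta_flip a (real_point p) = real_point (vieta_flip a p)"
  by (cases p; cases a) (auto simp: vieta_flip_def real_point_def)

lemma triple_prod_real_point: "triple_prod (real_point p) = of_real (triple_prod p)"
  by (cases p) (simp add: triple_prod_def real_point_def)

definition dominant :: "axis \<Rightarrow> real triple \<Rightarrow> bool" where
  "dominant a = (\<lambda>(x, y, z). 2 < \<bar>x\<bar> \<and> 2 < \<bar>y\<bar> \<and> 2 < \<bar>z\<bar> \<and> 0 < x*y*z \<and>
      (case a of X \<Rightarrow> \<bar>y\<bar> < \<bar>x\<bar> \<and> \<bar>z\<bar> < \<bar>x\<bar>
               | Y \<Rightarrow> \<bar>x\<bar> < \<bar>y\<bar> \<and> \<bar>z\<bar> < \<bar>y\<bar>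
               | Z \<Rightarrow> \<bar>x\<bar> < \<bar>z\<bar> \<and> \<bar>y\<bar> < \<bar>z\<bar>))"

fun pingpong_region :: "axis option \<Rightarrow> real triple \<Rightarrow> bool" where
  "pingpong_region None (x, y, z) = (x < -2 \<and> y < -2 \<and> z < -2)"
| "pingpong_region (Some a) p = dominant a p"

lemma Omega0_eq: "Omega0 = real_point ` Collect (pingpong_region None)"
  by (auto simp: Omega0_def real_point_def image_def)

lemma triple_prod_dominant: "dominant a q \<Longrightarrow> 0 < triple_prod q"
  by (cases q) (simp add: dominant_def triple_prod_def)

lemma triple_prod_negative_box: "pingpong_region None q \<Longrightarrow> triple_prod q < 0"
  by (cases q) (auto simp: triple_prod_def intro!: mult_pos_neg mult_neg_neg)

lemma vieta_growth:
  fixes m n t :: real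
  assumes "\<bar>t\<bar> < \<bar>m\<bar>" "2 < \<bar>n\<bar>" "0 < m*n*t"
  shows "\<bar>m\<bar> < \<bar>m*n - t\<bar>" "0 < (m*n - t) * (m*n)"
proof -
  have "0 < \<bar>m\<bar>" using assms(1) by linarith
  then have big: "2 * \<bar>m\<bar> < \<bar>m*n\<bar>"
    using mult_strict_left_mono[OF assms(2), of "\<bar>m\<bar>"] by (simp add: abs_mult mult.commute)
  have "(0 < m*n \<and> 0 < t) \<or> (m*n < 0 \<and> t < 0)"
    using assms(3) by (simp add: zero_less_mult_iff)
  then have "\<bar>m\<bar> < \<bar>m*n - t\<bar> \<and> 0 < (m*n - t) * (m*n)"
  proof (elim disjE conjE)
    assume "0 < m*n" "0 < t"
    then have "\<bar>m\<bar> < m*n - t" using big assms(1) by simp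
    then show ?thesis using \<open>0 < m*n\<close> by simp
  next
    assume "m*n < 0" "t < 0"
    then have "\<bar>m\<bar> < t - m*n" using big assms(1) by simp
    then show ?thesis using \<open>m*n < 0\<close> by (simp add: mult_neg_neg)
  qed
  then show "\<bar>m\<bar> < \<bar>m*n - t\<bar>" "0 < (m*n - t) * (m*n)" by auto
qed

lemma negative_box_vieta_growth:
  fixes x y z :: real
  assumes "x < -2" "y < -2" "z < -2"
  shows "\<bar>y\<bar> < y*z - x"
proof -
  have "y * -2 < y * z"
    using assms(2,3) by (intro mult_strict_left_mono_neg) auto
  then show ?thesis using assms by simp
qed

lemma dominant_vieta_flip:
  assumes "pingpong_region t p" "t \<noteq> Some a"
  shows "dominant a (vieta_flip a p)"
proof (cases t)
  case None
  obtain x y z where p: "p = (x, y, z)" by (cases p)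
  then have "x < -2" "y < -2" "z < -2" using assms None by auto
  then show ?thesis
    using negative_box_vieta_growth[of x y z] negative_box_vieta_growth[of x z y]
      negative_box_vieta_growth[of y x z] negative_box_vieta_growth[of y z x]
      negative_box_vieta_growth[of z x y] negative_box_vieta_growth[of z y x]
    by (cases a) (auto simp: dominant_def vieta_flip_def p mult.commute zero_less_mult_iff mult_less_0_iff)
next
  case (Some b)
  obtain x y z where p: "p = (x, y, z)" by (cases p)
  have "dominant b (x, y, z)" using assms Some p by simp
  (* the flipped coordinate becomes m*n - t with m the dominant coordinate and n the third one *)
  then show ?thesis
    using vieta_growth[of y x z] vieta_growth[of z x y] vieta_growth[of x y z]
      vieta_growth[of z y x] vieta_growth[of x z y] vieta_growth[of y z x] \<open>t \<noteq> Some a\<close>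
    by (cases a; cases b)
      (auto simp: dominant_def vieta_flip_def p Some ac_simps)
qed

definition klein_four :: "(pt \<Rightarrow> pt) set" where
  "klein_four = insert id sign_maps"

lemma klein_four_closed: "s \<in> sign_maps \<Longrightarrow> v \<in> klein_four \<Longrightarrow> s \<circ> v \<in> klein_four"
  by (auto simp: klein_four_def sign_maps_def fun_eq_iff)

lemma klein_four_vieta_flip_commute: "v \<in> klein_four \<Longrightarrow> v \<circ> vieta_flip a = vieta_flip a \<circ> v"
  using sign_map_vieta_flip_commute by (auto simp: klein_four_def)

lemma triple_prod_klein_four: "v \<in> klein_four \<Longrightarrow> triple_prod (v p) = triple_prod p"
  unfolding klein_four_def using triple_prod_sign_map[of v p] by auto

lemma klein_four_Omega0: "v \<in> klein_four \<Longrightarrow> p \<in> Omega0 \<Longrightarrow> v p \<in> Omega0 \<Longrightarrow> v = id"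
  by (auto simp: klein_four_def sign_maps_def Omega0_def)

(* reduced_word t w: w is a composition of Vieta flips without two equal adjacent factors,
   and t is its leftmost factor (None for the empty composition). *)
inductive reduced_word :: "axis option \<Rightarrow> (pt \<Rightarrow> pt) \<Rightarrow> bool" where
  reduced_id: "reduced_word None id"
| reduced_flip: "reduced_word t w \<Longrightarrow> t \<noteq> Some a \<Longrightarrow> reduced_word (Some a) (vieta_flip a \<circ> w)"

lemma Gamma2_eq: "Gamma2 = generated (sign_maps \<union> range vieta_flip)"
  by (simp add: Gamma2_def range_vieta_flip)

lemma Gamma2_normal_form:
  assumes "g \<in> Gamma2"
  shows "\<exists>v\<in>klein_four. \<exists>t w. reduced_word t w \<and> g = v \<circ> w"
  using assms unfolding Gamma2_eq
proof (induction g rule: generated.induct)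
  case gen_id
  show ?case
    by (intro bexI[of _ id] exI[of _ None] exI[of _ id] conjI reduced_id) (simp_all add: klein_four_def)
next
  case (gen_comp s h)
  then obtain v t w where vw: "v \<in> klein_four" "reduced_word t w" "h = v \<circ> w" by blast
  show ?case
  proof (cases "s \<in> sign_maps")
    case True
    then have "s \<circ> v \<in> klein_four" using vw(1) by (rule klein_four_closed)
    then show ?thesis using vw(2,3) by (metis comp_assoc)
  next
    case False
    then obtain a where "s = vieta_flip a" using gen_comp.hyps by blast
    then have sh: "s \<circ> h = v \<circ> (vieta_flip a \<circ> w)"
      using klein_four_vieta_flip_commute[OF vw(1)] vw(3) by (simp add: comp_assoc[symmetric])
    show ?thesis
    proof (cases "t = Some a")
      case True
      then obtain t' w' where "reduced_word t' w'" "w = vieta_flip a \<circ> w'"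
        using vw(2) by (auto elim: reduced_word.cases)
      then have "reduced_word t' w'" "vieta_flip a \<circ> w = w'"
        by (simp_all add: comp_assoc[symmetric] vieta_flip_involution)
      then show ?thesis using sh vw(1) by metis
    next
      case False
      then show ?thesis using sh vw by (metis reduced_flip)
    qed
  qed
qed

lemma reduced_word_pingpong:
  "reduced_word t w \<Longrightarrow> w ` Omega0 \<subseteq> real_point ` Collect (pingpong_region t)"
proof (induction rule: reduced_word.induct)
  case reduced_id
  show ?case by (auto simp: Omega0_eq)
next
  case (reduced_flip t w a)
  have "vieta_flip a ` real_point ` Collect (pingpong_region t)
      \<subseteq> real_point ` Collect (pingpong_region (Some a))"
    using dominant_vieta_flip[OF _ reduced_flip.hyps(2)] by (auto simp: vieta_flip_real_point)
  moreover have "(vieta_flip a \<circ> w) ` Omega0 \<subseteq> vieta_flip a ` real_point ` Collect (pingpong_region t)"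
    using reduced_flip.IH by (auto simp: image_comp[symmetric])
  ultimately show ?case by (meson order_trans)
qed

lemma Gamma2_meets_Omega0_imp_id:
  assumes "g \<in> Gamma2" "g ` Omega0 \<inter> Omega0 \<noteq> {}"
  shows "g = id"
proof -
  obtain v t w where vw: "v \<in> klein_four" "reduced_word t w" "g = v \<circ> w"
    using Gamma2_normal_form assms(1) by blast
  obtain p where p: "p \<in> Omega0" "g p \<in> Omega0" using assms(2) by blast
  show ?thesis
  proof (cases t)
    case None
    then have "w = id" using vw(2) by (auto elim: reduced_word.cases)
    then show ?thesis using klein_four_Omega0 vw p by simp
  next
    case (Some a)
    obtain q where q: "dominant a q" "w p = real_point q"
      using reduced_word_pingpong[OF vw(2)] p(1) Some by auto
    obtain q' where q': "pingpong_region None q'" "g p = real_point q'"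
      using p(2) by (auto simp: Omega0_eq)
    have "real_point q' = v (real_point q)" using q(2) q'(2) vw(3) by simp
    then have "triple_prod (real_point q') = triple_prod (real_point q)"
      using triple_prod_klein_four[OF vw(1)] by metis
    then have "of_real (triple_prod q') = (of_real (triple_prod q) :: complex)"
      by (simp add: triple_prod_real_point)
    moreover have "0 < triple_prod q" "triple_prod q' < 0"
      using q(1) q'(1) by (simp_all add: triple_prod_dominant triple_prod_negative_box)
    ultimately show ?thesis by simp
  qed
qed

lemma Gamma2_inverse: "g \<in> Gamma2 \<Longrightarrow> \<exists>h\<in>Gamma2. h \<circ> g = id \<and> g \<circ> h = id"
  unfolding Gamma2_eq
  by (rule generated_inverse) (auto simp: sign_map_involution vieta_flip_involution)

lemma Gamma2_translates_meet_imp_eq: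
  assumes "\<gamma> \<in> Gamma2" "\<delta> \<in> Gamma2" "\<gamma> ` Omega0 \<inter> \<delta> ` Omega0 \<noteq> {}"
  shows "\<gamma> = \<delta>"
proof -
  obtain h where h: "h \<in> Gamma2" "h \<circ> \<delta> = id" "\<delta> \<circ> h = id"
    using Gamma2_inverse assms(2) by blast
  obtain p p' where "p \<in> Omega0" "p' \<in> Omega0" "\<gamma> p = \<delta> p'" using assms(3) by blast
  then have "(h \<circ> \<gamma>) p = p'" using h(2) by (metis comp_apply id_apply)
  then have "(h \<circ> \<gamma>) ` Omega0 \<inter> Omega0 \<noteq> {}" using \<open>p \<in> Omega0\<close> \<open>p' \<in> Omega0\<close> by blast
  moreover have "h \<circ> \<gamma> \<in> Gamma2" using h(1) assms(1) unfolding Gamma2_def by (rule generated_comp)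
  ultimately have "h \<circ> \<gamma> = id" by (rule Gamma2_meets_Omega0_imp_id[rotated])
  have "\<gamma> = (\<delta> \<circ> h) \<circ> \<gamma>" using h(3) by simp
  also have "\<dots> = \<delta> \<circ> (h \<circ> \<gamma>)" by (simp add: comp_assoc)
  also have "\<dots> = \<delta>" using \<open>h \<circ> \<gamma> = id\<close> by simp
  finally show ?thesis .
qed

lemma perm_maps_normalize:
  "q \<in> perm_maps \<Longrightarrow> s \<in> sign_maps \<union> {Qx, Qy, Qz} \<Longrightarrow>
    \<exists>s'\<in>sign_maps \<union> {Qx, Qy, Qz}. q \<circ> s = s' \<circ> q"
  unfolding perm_maps_def sign_maps_def Qx_def Qy_def Qz_def
  by (auto simp: fun_eq_iff ac_simps)

lemma perm_maps_Omega0: "q \<in> perm_maps \<Longrightarrow> q ` Omega0 \<subseteq> Omega0"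
  unfolding perm_maps_def Omega0_def by (elim insertE; force)

lemma Gamma2_subset_Gamma: "Gamma2 \<subseteq> Gamma"
proof -
  define \<tau> \<rho> :: "pt \<Rightarrow> pt" where "\<tau> = (\<lambda>(x, y, z). (y, x, z))" and "\<rho> = (\<lambda>(x, y, z). (z, y, x))"
  have "\<tau> \<in> Gamma" "\<rho> \<in> Gamma" and Qx: "Qx \<in> Gamma" and sign: "sign_maps \<subseteq> Gamma"
    unfolding Gamma_def by (auto intro!: generated_base simp: perm_maps_def \<tau>_def \<rho>_def)
  moreover have "Qy = \<tau> \<circ> Qx \<circ> \<tau>" "Qz = \<rho> \<circ> Qx \<circ> \<rho>"
    by (auto simp: fun_eq_iff Qx_def Qy_def Qz_def \<tau>_def \<rho>_def mult.commute)
  ultimately have "Qy \<in> Gamma" "Qz \<in> Gamma"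
    unfolding Gamma_def by (metis generated_comp)+
  then have "sign_maps \<union> {Qx, Qy, Qz} \<subseteq> Gamma" using Qx sign by blast
  then show ?thesis unfolding Gamma2_def Gamma_def by (rule generated_subset)
qed

lemma Gamma_decompose: "g \<in> Gamma \<Longrightarrow> \<exists>h\<in>Gamma2. \<exists>p\<in>generated perm_maps. g = h \<circ> p"
proof -
  assume "g \<in> Gamma"
  moreover have "Gamma \<subseteq> generated (perm_maps \<union> (sign_maps \<union> {Qx, Qy, Qz}))"
    unfolding Gamma_def by (rule generated_subset) (auto intro: generated_base)
  ultimately show ?thesis
    unfolding Gamma2_def by (intro generated_split[OF perm_maps_normalize]) auto
qed

lemma Omega_eq: "Omega = (\<Union>\<gamma>\<in>Gamma2. \<gamma> ` Omega0)"
proof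
  show "Omega \<subseteq> (\<Union>\<gamma>\<in>Gamma2. \<gamma> ` Omega0)"
  proof
    fix x assume "x \<in> Omega"
    then obtain g p where "g \<in> Gamma" "p \<in> Omega0" "x = g p" unfolding Omega_def by auto
    moreover obtain h q where "h \<in> Gamma2" "q \<in> generated perm_maps" "g = h \<circ> q"
      using Gamma_decompose \<open>g \<in> Gamma\<close> by blast
    moreover have "q p \<in> Omega0"
      using generated_image_subset[OF perm_maps_Omega0 \<open>q \<in> generated perm_maps\<close>] \<open>p \<in> Omega0\<close> by blast
    ultimately show "x \<in> (\<Union>\<gamma>\<in>Gamma2. \<gamma> ` Omega0)" by auto
  qed
  show "(\<Union>\<gamma>\<in>Gamma2. \<gamma> ` Omega0) \<subseteq> Omega"
    using Gamma2_subset_Gamma unfolding Omega_def by auto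
qed

theorem mainTheorem8:
  shows "(\<forall>\<gamma>\<in>Gamma2. \<gamma> ` Omega0 \<inter> Omega0 \<noteq> {} \<longrightarrow> \<gamma> = id)
       \<and> Omega = (\<Union>\<gamma>\<in>Gamma2. \<gamma> ` Omega0)
       \<and> (\<forall>\<gamma>\<in>Gamma2. \<forall>\<delta>\<in>Gamma2. \<gamma> \<noteq> \<delta> \<longrightarrow> \<gamma> ` Omega0 \<inter> \<delta> ` Omega0 = {})"
  using Gamma2_meets_Omega0_imp_id Omega_eq Gamma2_translates_meet_imp_eq by blast

end
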